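(* There exists at most one family $(\phi_k)_{k\geq 0}$ of $\mathbb{Z}[q,q^{-1}]$-linear maps $\phi_k\colon H_k\to\mathbb{Q}(q)$ satisfying all of the following: (i) $\phi_k(xy)=\phi_k(yx)$ for all $k$ and all $x,y\in H_k$; (ii) $\phi_0(1)=1$ and $\phi_1(1)=1$; (iii) for every $k\geq 2$ and every word $w$ in $\tau_1,\dots,\tau_{k-1}$ such that some letter $\tau_i$ ($1\le i\le k-1$) does not occur in $w$, one has $\phi_k(\theta_w)=0$; (iv) for every $k\geq 2$ and every $x\in H_{k-1}\subset H_k$, one has $\phi_k(\theta_{k-1}x)=\phi_{k-1}(x)$.
   Context: For $n\geq 0$, the Hecke algebra $H_n$ is the unital $\mathbb{Z}[q,q^{-1}]$-algebra generated by $\theta_1,\dots,\theta_{n-1}$ (so $H_0=H_1=\mathbb{Z}[q,q^{-1}]$) subject to the relations $\theta_i^2=[2]\theta_i$ (with $[2]=q+q^{-1}$); $\theta_i\theta_j=\theta_j\theta_i$ for $|i-j|\geq 2$; and $\theta_i\theta_{i+1}\theta_i+\theta_{i+1}=\theta_{i+1}\theta_i\theta_{i+1}+\theta_i$ for $1\le i\le n-2$. For $n\geq2$, $H_{n-1}$ embeds in $H_n$ via $\theta_i\mapsto\theta_i$. Let $\tau_i=(i\ i+1)\in S_n$ and for a word $w=\tau_{i_1}\cdots\tau_{i_l}$ set $\theta_w=\theta_{i_1}\cdots\theta_{i_l}$. Graphically, $\theta_i$ is drawn as $n$ upward strands of label $1$ where strands $i,i+1$ merge into an edge of label $2$ (a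 ``dumble'') and split again; $\phi_k$ models a function on the closures of such diagrams in an annulus (vinyl graphs of level $k$), condition (iii) says $\phi$ vanishes on disconnected closures, and condition (iv) says closures related by removing an outer curl (an outer digon) have equal value. *)

theory Defs
  imports "HOL-Computational_Algebra.Polynomial" "HOL-Computational_Algebra.Fraction_Field"
begin

type_synonym ratfun = "rat poly fract"

definition qq :: ratfun where "qq = Fract [:0, 1:] 1"

definition qtwo :: ratfun where "qtwo = qq + inverse qq"

text \<open>A word tau_{i_1} ... tau_{i_l} in S_k is encoded as the list [i_1,...,i_l];
  it is a word in the generators of H_k iff all letters lie in {1,...,k-1}.\<close>
definition word_in :: "nat \<Rightarrow> nat list \<Rightarrow> bool" where
  "word_in k w \<longleftrightarrow> (\<forall>i\<in>set w. 1 \<le> i \<and> i < k)"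

text \<open>A Z[q,q^-1]-linear map phi: H_k \<rightarrow> Q(q) is the same as its values f w = phi(theta_w)
  on the spanning family theta_w, subject to the condition that the linear extension
  to the free algebra kills the two-sided ideal generated by the defining relations,
  i.e. f respects every relation inserted in every context u _ v.\<close>
definition hecke_functional :: "nat \<Rightarrow> (nat list \<Rightarrow> ratfun) \<Rightarrow> bool" where
  "hecke_functional k f \<longleftrightarrow>
     (\<forall>u v i. word_in k u \<and> word_in k v \<and> 1 \<le> i \<and> i < k \<longrightarrow>
        f (u @ [i, i] @ v) = qtwo * f (u @ [i] @ v)) \<and>
     (\<forall>u v i j. word_in k u \<and> word_in k v \<and> 1 \<le> i \<and> i < k \<and> 1 \<le> j \<and> j < k \<and>
        (i + 2 \<le> j \<or> j + 2 \<le> i) \<longrightarrow>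
        f (u @ [i, j] @ v) = f (u @ [j, i] @ v)) \<and>
     (\<forall>u v i. word_in k u \<and> word_in k v \<and> 1 \<le> i \<and> i + 1 < k \<longrightarrow>
        f (u @ [i, i + 1, i] @ v) + f (u @ [i + 1] @ v) =
        f (u @ [i + 1, i, i + 1] @ v) + f (u @ [i] @ v))"

text \<open>A family (phi_k) satisfying (i)-(iv); phi k w stands for phi_k(theta_w).
  By linearity, (i) and (iv) need only be checked on the spanning families.\<close>
definition good_family :: "(nat \<Rightarrow> nat list \<Rightarrow> ratfun) \<Rightarrow> bool" where
  "good_family \<phi> \<longleftrightarrow>
     (\<forall>k. hecke_functional k (\<phi> k)) \<and>
     \<comment> \<open>(i) trace property\<close>
     (\<forall>k u v. word_in k u \<and> word_in k v \<longrightarrow> \<phi> k (u @ v) = \<phi> k (v @ u)) \<and>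
     \<comment> \<open>(ii) normalisation\<close>
     \<phi> 0 [] = 1 \<and> \<phi> 1 [] = 1 \<and>
     \<comment> \<open>(iii) vanishing on words missing a generator\<close>
     (\<forall>k w. 2 \<le> k \<and> word_in k w \<and> (\<exists>i. 1 \<le> i \<and> i < k \<and> i \<notin> set w) \<longrightarrow> \<phi> k w = 0) \<and>
     \<comment> \<open>(iv) Markov-type condition\<close>
     (\<forall>k w. 2 \<le> k \<and> word_in (k - 1) w \<longrightarrow> \<phi> k ((k - 1) # w) = \<phi> (k - 1) w)"

end

theory Submission
  imports Defs
begin

text \<open>On each \<open>H\<^sub>k\<close> the difference \<open>d\<close> of two such families is a linear functional.
  By (iii), and by (i) and (iv) together with induction on \<open>k\<close>, it vanishes on every word
  in which the top generator \<open>\<theta>\<^sub>k\<^sub>-\<^sub>1\<close> occurs at most once. A linear functional on \<open>H\<^sub>k\<close> with this property vanishes identically: for a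
  word \<open>p \<theta>\<^sub>k\<^sub>-\<^sub>1 x \<theta>\<^sub>k\<^sub>-\<^sub>1 s\<close> with \<open>x \<in> H\<^sub>k\<^sub>-\<^sub>1\<close>, the map \<open>x \<mapsto> d(p \<theta>\<^sub>k\<^sub>-\<^sub>1 x \<theta>\<^sub>k\<^sub>-\<^sub>1 s)\<close> is a
  linear functional on \<open>H\<^sub>k\<^sub>-\<^sub>1\<close>, and on words \<open>x\<close> in which \<open>\<theta>\<^sub>k\<^sub>-\<^sub>2\<close> occurs at most once the
  relations \<open>\<theta>\<^sup>2 = [2]\<theta>\<close> and \<open>\<theta>\<^sub>k\<^sub>-\<^sub>1\<theta>\<^sub>k\<^sub>-\<^sub>2\<theta>\<^sub>k\<^sub>-\<^sub>1 = \<theta>\<^sub>k\<^sub>-\<^sub>2\<theta>\<^sub>k\<^sub>-\<^sub>1\<theta>\<^sub>k\<^sub>-\<^sub>2 + \<theta>\<^sub>k\<^sub>-\<^sub>1 - \<theta>\<^sub>k\<^sub>-\<^sub>2\<close>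
  lower the number of occurrences of \<open>\<theta>\<^sub>k\<^sub>-\<^sub>1\<close>. Induction on that number and on \<open>k\<close> concludes.\<close>

lemma word_in_simps [simp]:
  "word_in k []"
  "word_in k (x # w) \<longleftrightarrow> 1 \<le> x \<and> x < k \<and> word_in k w"
  "word_in k (u @ w) \<longleftrightarrow> word_in k u \<and> word_in k w"
  by (auto simp: word_in_def)

lemma word_in_mono: "word_in k w \<Longrightarrow> k \<le> n \<Longrightarrow> word_in n w"
  by (auto simp: word_in_def)

lemma word_in_Suc_not_top: "word_in (Suc k) w \<Longrightarrow> k \<notin> set w \<Longrightarrow> word_in k w"
  by (auto simp: word_in_def less_Suc_eq)

lemma count_list_eq_0_if_word_in: "word_in k w \<Longrightarrow> k \<le> j \<Longrightarrow> count_list w j = 0"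
  by (auto simp: word_in_def count_list_0_iff)

lemma split_list_count_le_1:
  assumes "x \<in> set xs" and "count_list xs x \<le> 1"
  obtains u v where "xs = u @ x # v" "x \<notin> set u" "x \<notin> set v"
proof -
  obtain u v where xs: "xs = u @ x # v" "x \<notin> set u"
    using assms(1) by (meson split_list_first)
  with assms(2) have "count_list v x = 0"
    by (simp add: count_list_0_iff)
  with xs show thesis
    using that by (simp add: count_list_0_iff)
qed

lemma split_list_count_ge_2:
  assumes "2 \<le> count_list xs x"
  obtains p q s where "xs = p @ x # q @ x # s" "x \<notin> set q"
proof -
  have "x \<in> set xs"
    by (metis assms count_list_0_iff not_numeral_le_zero)
  then obtain p r where xs: "xs = p @ x # r" "x \<notin> set p"
    by (meson split_list_first)
  with assms have "x \<in> set r"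
    using count_list_0_iff[of r x] by auto
  then obtain q s where "r = q @ x # s" "x \<notin> set q"
    by (meson split_list_first)
  with xs show thesis
    using that by simp
qed

lemma hecke_functional_quadratic:
  "hecke_functional k f \<Longrightarrow> word_in k u \<Longrightarrow> word_in k v \<Longrightarrow> 1 \<le> i \<Longrightarrow> i < k \<Longrightarrow>
    f (u @ [i, i] @ v) = qtwo * f (u @ [i] @ v)"
  unfolding hecke_functional_def by blast

lemma hecke_functional_commute:
  "hecke_functional k f \<Longrightarrow> word_in k u \<Longrightarrow> word_in k v \<Longrightarrow> 1 \<le> i \<Longrightarrow> i < k \<Longrightarrow>
    1 \<le> j \<Longrightarrow> j < k \<Longrightarrow> i + 2 \<le> j \<or> j + 2 \<le> i \<Longrightarrow>
    f (u @ [i, j] @ v) = f (u @ [j, i] @ v)"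
  unfolding hecke_functional_def by blast

lemma hecke_functional_braid:
  "hecke_functional k f \<Longrightarrow> word_in k u \<Longrightarrow> word_in k v \<Longrightarrow> 1 \<le> i \<Longrightarrow> i + 1 < k \<Longrightarrow>
    f (u @ [i, i + 1, i] @ v) + f (u @ [i + 1] @ v) =
    f (u @ [i + 1, i, i + 1] @ v) + f (u @ [i] @ v)"
  unfolding hecke_functional_def by blast

lemma hecke_functional_diff:
  assumes f: "hecke_functional k f" and g: "hecke_functional k g"
  shows "hecke_functional k (\<lambda>w. f w - g w)"
  unfolding hecke_functional_def
proof (intro conjI allI impI; elim conjE)
  fix u v i assume prems: "word_in k u" "word_in k v" "1 \<le> i" "i < k"
  show "f (u @ [i, i] @ v) - g (u @ [i, i] @ v) = qtwo * (f (u @ [i] @ v) - g (u @ [i] @ v))"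
    using hecke_functional_quadratic[OF f prems] hecke_functional_quadratic[OF g prems]
    by (simp add: right_diff_distrib)
next
  fix u v i j assume prems: "word_in k u" "word_in k v" "1 \<le> i" "i < k" "1 \<le> j" "j < k"
    "i + 2 \<le> j \<or> j + 2 \<le> i"
  show "f (u @ [i, j] @ v) - g (u @ [i, j] @ v) = f (u @ [j, i] @ v) - g (u @ [j, i] @ v)"
    using hecke_functional_commute[OF f prems] hecke_functional_commute[OF g prems] by simp
next
  fix u v i assume prems: "word_in k u" "word_in k v" "1 \<le> i" "i + 1 < k"
  show "f (u @ [i, i + 1, i] @ v) - g (u @ [i, i + 1, i] @ v) +
      (f (u @ [i + 1] @ v) - g (u @ [i + 1] @ v)) =
    f (u @ [i + 1, i, i + 1] @ v) - g (u @ [i + 1, i, i + 1] @ v) +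
      (f (u @ [i] @ v) - g (u @ [i] @ v))"
    by (simp only: add_diff_add[symmetric] hecke_functional_braid[OF f prems]
        hecke_functional_braid[OF g prems])
qed

lemma hecke_functional_sandwich:
  assumes f: "hecke_functional n f" and "k \<le> n" and l: "word_in n l" and r: "word_in n r"
  shows "hecke_functional k (\<lambda>x. f (l @ x @ r))"
proof -
  have context_in: "word_in n (l @ u)" "word_in n (v @ r)"
    if "word_in k u" "word_in k v" for u v
    using that l r \<open>k \<le> n\<close> word_in_mono by auto
  show ?thesis
    unfolding hecke_functional_def
  proof (intro conjI allI impI; elim conjE)
    fix u v i assume "word_in k u" "word_in k v" "1 \<le> i" "i < k"
    then show "f (l @ (u @ [i, i] @ v) @ r) = qtwo * f (l @ (u @ [i] @ v) @ r)"
      using hecke_functional_quadratic[OF f context_in] \<open>k \<le> n\<close> by simp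
  next
    fix u v i j assume "word_in k u" "word_in k v" "1 \<le> i" "i < k" "1 \<le> j" "j < k"
      "i + 2 \<le> j \<or> j + 2 \<le> i"
    then show "f (l @ (u @ [i, j] @ v) @ r) = f (l @ (u @ [j, i] @ v) @ r)"
      using hecke_functional_commute[OF f context_in, where i=i and j=j] \<open>k \<le> n\<close> by simp
  next
    fix u v i assume "word_in k u" "word_in k v" "1 \<le> i" "i + 1 < k"
    then show "f (l @ (u @ [i, i + 1, i] @ v) @ r) + f (l @ (u @ [i + 1] @ v) @ r) =
        f (l @ (u @ [i + 1, i, i + 1] @ v) @ r) + f (l @ (u @ [i] @ v) @ r)"
      using hecke_functional_braid[OF f context_in, where i=i] \<open>k \<le> n\<close> by simp
  qed
qed

lemma hecke_functional_commute_past: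
  assumes f: "hecke_functional n f" and "word_in n l" "word_in n r" "word_in m a" "Suc m < n"
  shows "f (l @ Suc m # a @ r) = f (l @ a @ Suc m # r)"
  using assms(2-5)
proof (induction a arbitrary: l)
  case (Cons b a)
  then have "f (l @ [Suc m, b] @ a @ r) = f (l @ [b, Suc m] @ a @ r)"
    using word_in_mono[of m a n] by (intro hecke_functional_commute[OF f]) auto
  also have "\<dots> = f ((l @ [b]) @ a @ Suc m # r)"
    using Cons.IH[of "l @ [b]"] Cons.prems by simp
  finally show ?case
    by simp
qed simp

lemma hecke_functional_top_twice_no_neighbour:
  assumes f: "hecke_functional n f" and l: "word_in n l" and r: "word_in n r"
    and x: "word_in m x" and m: "Suc m < n"
  shows "f (l @ Suc m # x @ Suc m # r) = qtwo * f (l @ x @ Suc m # r)"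
proof -
  have mr: "word_in n (Suc m # r)" and lx: "word_in n (l @ x)"
    using l r x m word_in_mono[OF x, of n] by auto
  have "f (l @ Suc m # x @ Suc m # r) = f ((l @ x) @ [Suc m, Suc m] @ r)"
    using hecke_functional_commute_past[OF f l mr x m] by simp
  also have "\<dots> = qtwo * f (l @ x @ Suc m # r)"
    using hecke_functional_quadratic[OF f lx r, of "Suc m"] m by simp
  finally show ?thesis .
qed

lemma hecke_functional_top_twice_one_neighbour:
  assumes f: "hecke_functional n f" and l: "word_in n l" and r: "word_in n r"
    and b: "word_in m b" and c: "word_in m c" and m: "1 \<le> m" "Suc m < n"
  shows "f (l @ Suc m # b @ m # c @ Suc m # r) =
    f (l @ b @ [m, Suc m, m] @ c @ r) + f (l @ b @ Suc m # c @ r) - f (l @ b @ m # c @ r)"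
proof -
  have bn: "word_in n b" and cn: "word_in n c"
    using word_in_mono[OF b, of n] word_in_mono[OF c, of n] m by auto
  have mcmr: "word_in n (m # c @ Suc m # r)" and lbmm: "word_in n (l @ b @ [Suc m, m])"
    and lb: "word_in n (l @ b)" and cr: "word_in n (c @ r)"
    using l r bn cn m by auto
  have braid: "f (l @ b @ [m, Suc m, m] @ c @ r) + f (l @ b @ Suc m # c @ r) =
      f (l @ b @ [Suc m, m, Suc m] @ c @ r) + f (l @ b @ m # c @ r)"
    using hecke_functional_braid[OF f lb cr m(1)] m(2) by simp
  have "f (l @ Suc m # b @ m # c @ Suc m # r) = f (l @ b @ Suc m # m # c @ Suc m # r)"
    using hecke_functional_commute_past[OF f l mcmr b m(2)] by simp
  also have "\<dots> = f ((l @ b) @ [Suc m, m, Suc m] @ c @ r)"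
    using hecke_functional_commute_past[OF f lbmm r c m(2)] by simp
  also have "\<dots> = f (l @ b @ [m, Suc m, m] @ c @ r) + f (l @ b @ Suc m # c @ r)
      - f (l @ b @ m # c @ r)"
    using braid by (simp add: eq_diff_eq)
  finally show ?thesis .
qed

lemma hecke_functional_sandwich_eq_0:
  assumes f: "hecke_functional (Suc (Suc k)) f"
    and p: "word_in (Suc (Suc k)) p" and s: "word_in (Suc (Suc k)) s"
    and fewer: "\<And>w. word_in (Suc (Suc k)) w \<Longrightarrow>
      count_list w (Suc k) < count_list p (Suc k) + count_list s (Suc k) + 2 \<Longrightarrow> f w = 0"
    and a: "word_in (Suc k) a" and once: "count_list a k \<le> 1"
  shows "f (p @ Suc k # a @ Suc k # s) = 0"
proof (cases "k \<in> set a")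
  case False
  then have ak: "word_in k a"
    using a word_in_Suc_not_top by blast
  have "f (p @ a @ Suc k # s) = 0"
    using fewer p s word_in_mono[OF ak] count_list_eq_0_if_word_in[OF ak] by simp
  then show ?thesis
    using hecke_functional_top_twice_no_neighbour[OF f p s ak] by simp
next
  case True
  then obtain b c where abc: "a = b @ k # c" "k \<notin> set b" "k \<notin> set c"
    using once by (elim split_list_count_le_1)
  then have b: "word_in k b" and c: "word_in k c" and "1 \<le> k"
    using a word_in_Suc_not_top by auto
  have "f w = 0" if "w \<in> {p @ b @ [k, Suc k, k] @ c @ s, p @ b @ Suc k # c @ s, p @ b @ k # c @ s}"
    for w
    using that fewer p s word_in_mono[OF b] word_in_mono[OF c] \<open>1 \<le> k\<close>
      count_list_eq_0_if_word_in[OF b] count_list_eq_0_if_word_in[OF c]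
    by auto
  then show ?thesis
    using hecke_functional_top_twice_one_neighbour[OF f p s b c \<open>1 \<le> k\<close>] abc by simp
qed

theorem hecke_functional_eq_0_if_top_at_most_once:
  assumes "hecke_functional (Suc k) f"
    and "\<And>a. word_in (Suc k) a \<Longrightarrow> count_list a k \<le> 1 \<Longrightarrow> f a = 0"
    and "word_in (Suc k) w"
  shows "f w = 0"
  using assms
proof (induction k arbitrary: f w)
  case 0
  then have "w = []"
    by (cases w) auto
  with 0 show ?case
    by simp
next
  case (Suc k)
  show ?case
    using \<open>word_in (Suc (Suc k)) w\<close>
  proof (induction "count_list w (Suc k)" arbitrary: w rule: less_induct)
    case less
    show ?case
    proof (cases "count_list w (Suc k) \<le> 1")
      case False
      then have "2 \<le> count_list w (Suc k)"
        by simp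
      then obtain p q s where w: "w = p @ Suc k # q @ Suc k # s" "Suc k \<notin> set q"
        by (rule split_list_count_ge_2)
      then have p: "word_in (Suc (Suc k)) p" and s: "word_in (Suc (Suc k)) s"
        and q: "word_in (Suc k) q"
        using less.prems word_in_Suc_not_top by auto
      have "hecke_functional (Suc k) (\<lambda>x. f (p @ Suc k # x @ Suc k # s))"
        using hecke_functional_sandwich[OF Suc.prems(1), of "Suc k" "p @ [Suc k]" "Suc k # s"]
          p s by simp
      moreover have "f (p @ Suc k # x @ Suc k # s) = 0"
        if "word_in (Suc k) x" "count_list x k \<le> 1" for x
        using hecke_functional_sandwich_eq_0[OF Suc.prems(1) p s _ that] less.hyps w by simp
      ultimately show ?thesis
        using Suc.IH q w(1) by blast
    qed (use Suc.prems less.prems in blast)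
  qed
qed

lemma good_familyD:
  assumes "good_family \<phi>"
  shows good_family_hecke_functional: "hecke_functional k (\<phi> k)"
    and good_family_trace: "word_in k u \<Longrightarrow> word_in k v \<Longrightarrow> \<phi> k (u @ v) = \<phi> k (v @ u)"
    and good_family_normalised: "\<phi> 0 [] = 1" "\<phi> 1 [] = 1"
    and good_family_missing_generator:
      "2 \<le> k \<Longrightarrow> word_in k w \<Longrightarrow> 1 \<le> i \<Longrightarrow> i < k \<Longrightarrow> i \<notin> set w \<Longrightarrow> \<phi> k w = 0"
    and good_family_markov:
      "2 \<le> k \<Longrightarrow> word_in (k - 1) w \<Longrightarrow> \<phi> k ((k - 1) # w) = \<phi> (k - 1) w"
  using assms unfolding good_family_def by blast+

lemma good_family_top_once:
  assumes \<phi>: "good_family \<phi>" and "1 \<le> n" and u: "word_in n u" and v: "word_in n v"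
  shows "\<phi> (Suc n) (u @ n # v) = \<phi> n (v @ u)"
proof -
  have "\<phi> (Suc n) (u @ n # v) = \<phi> (Suc n) ((n # v) @ u)"
    using good_family_trace[OF \<phi>, of "Suc n" u "n # v"] word_in_mono[OF u, of "Suc n"]
      word_in_mono[OF v, of "Suc n"] \<open>1 \<le> n\<close> by simp
  also have "\<dots> = \<phi> n (v @ u)"
    using good_family_markov[OF \<phi>, of "Suc n" "v @ u"] u v \<open>1 \<le> n\<close> by simp
  finally show ?thesis .
qed

lemma good_families_agree_if_top_at_most_once:
  assumes \<phi>: "good_family \<phi>" and \<psi>: "good_family \<psi>" and "1 \<le> n"
    and agree: "\<And>w. word_in n w \<Longrightarrow> \<phi> n w = \<psi> n w"
    and a: "word_in (Suc n) a" and once: "count_list a n \<le> 1"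
  shows "\<phi> (Suc n) a = \<psi> (Suc n) a"
proof (cases "n \<in> set a")
  case False
  then show ?thesis
    using good_family_missing_generator[OF \<phi> _ a] good_family_missing_generator[OF \<psi> _ a]
      \<open>1 \<le> n\<close> by simp
next
  case True
  then obtain u v where "a = u @ n # v" "n \<notin> set u" "n \<notin> set v"
    using once by (rule split_list_count_le_1)
  moreover have "word_in n u" "word_in n v"
    using a calculation word_in_Suc_not_top by auto
  ultimately show ?thesis
    using good_family_top_once[OF \<phi> \<open>1 \<le> n\<close>] good_family_top_once[OF \<psi> \<open>1 \<le> n\<close>] agree
    by simp
qed

theorem mainTheorem3:
  fixes \<phi> \<psi> :: "nat \<Rightarrow> nat list \<Rightarrow> ratfun"
  assumes "good_family \<phi>" and "good_family \<psi>"
  shows "\<forall>k w. word_in k w \<longrightarrow> \<phi> k w = \<psi> k w"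
proof (intro allI impI)
  fix k w assume "word_in k w"
  then show "\<phi> k w = \<psi> k w"
  proof (induction k arbitrary: w rule: less_induct)
    case (less k)
    show ?case
    proof (cases "k < 2")
      case True
      then have "w = []" and "k = 0 \<or> k = 1"
        using less.prems by (cases w; auto)+
      then show ?thesis
        using good_family_normalised[OF assms(1)] good_family_normalised[OF assms(2)] by auto
    next
      case False
      then obtain n where k: "k = Suc n" "1 \<le> n"
        by (cases k) auto
      have diff: "hecke_functional (Suc n) (\<lambda>w. \<phi> k w - \<psi> k w)"
        using good_family_hecke_functional[OF assms(1)] good_family_hecke_functional[OF assms(2)] k
        by (simp add: hecke_functional_diff)
      have agree: "\<phi> k a - \<psi> k a = 0" if "word_in (Suc n) a" "count_list a n \<le> 1" for a
        using good_families_agree_if_top_at_most_once[OF assms k(2) _ that] less.IH k by simp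
      have "\<phi> k w - \<psi> k w = 0"
        using hecke_functional_eq_0_if_top_at_most_once[OF diff agree] less.prems k by simp
      then show ?thesis
        by simp
    qed
  qed
qed

end
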